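(* Let $b_n$ be the number of Dyck paths of semilength $n\ge1$ in which every descent except the last one has odd length, and the last descent has even length. Let $h_0(z)=\sum_{n\ge1}b_nz^{2n}$. Then $$h_0=\frac{z^2}{v_1^2-z^2}=\frac1{z^2}-\frac{v_1}{z}-1,$$ and, with $Z=z^2$, $h_0=Z^2+2Z^3+4Z^4+10Z^5+26Z^6+68Z^7+\cdots$.
   Context: A Dyck path is a finite sequence of up-steps $(1,1)$ and down-steps $(1,-1)$ starting at height $0$, never going below height $0$, and ending at height $0$; its semilength is half its number of steps. Only nonempty paths are considered, so every path has a last descent. A descent is a maximal run of consecutive down-steps; its length is the number of down-steps in it. Let $v_1=v_1(z)$ denote the unique root $u$ of the cubic $$z u^3+(z^2-1)u^2-z^3u+z^2=0$$ which is a Laurent series in $z$ with $z\,v_1(z)\to1$ as $z\to0$. Its expansion begins $v_1=\frac1z-z-z^5-2z^7-\cdots$. *)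

theory Defs
  imports "HOL-Computational_Algebra.Formal_Laurent_Series"
begin

text \<open>Dyck paths as lists of steps: True = up-step (1,1), False = down-step (1,-1).\<close>

definition ups :: "bool list \<Rightarrow> nat" where
  "ups xs = length (filter (\<lambda>s. s) xs)"

definition downs :: "bool list \<Rightarrow> nat" where
  "downs xs = length (filter (\<lambda>s. \<not> s) xs)"

definition dyck_path :: "bool list \<Rightarrow> bool" where
  "dyck_path xs \<longleftrightarrow> (\<forall>i \<le> length xs. downs (take i xs) \<le> ups (take i xs)) \<and> ups xs = downs xs"

text \<open>Lengths of the maximal runs of consecutive down-steps, left to right;
  the first argument is the length of the current run being read.\<close>
fun desc_aux :: "nat \<Rightarrow> bool list \<Rightarrow> nat list" where
  "desc_aux k [] = (if k > 0 then [k] else [])"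
| "desc_aux k (False # xs) = desc_aux (Suc k) xs"
| "desc_aux k (True # xs) = (if k > 0 then k # desc_aux 0 xs else desc_aux 0 xs)"

definition descents :: "bool list \<Rightarrow> nat list" where
  "descents xs = desc_aux 0 xs"

definition b :: "nat \<Rightarrow> nat" where
  "b n = card {xs. length xs = 2 * n \<and> dyck_path xs \<and>
           descents xs \<noteq> [] \<and> (\<forall>d \<in> set (butlast (descents xs)). odd d) \<and>
           even (last (descents xs))}"

definition h0 :: "real fls" where
  "h0 = fps_to_fls (Abs_fps (\<lambda>k. if even k \<and> k \<ge> 2 then real (b (k div 2)) else 0))"

text \<open>v_1: the unique Laurent-series root u of z u^3 + (z^2-1) u^2 - z^3 u + z^2 = 0
  with z u -> 1 as z -> 0 (i.e. z u is a power series with constant term 1).\<close>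
definition v1 :: "real fls" where
  "v1 = (THE u. fls_X * u ^ 3 + (fls_X ^ 2 - 1) * u ^ 2 - fls_X ^ 3 * u + fls_X ^ 2 = 0
              \<and> fls_subdegree (fls_X * u) \<ge> 0 \<and> fls_nth (fls_X * u) 0 = 1)"

end

theory Submission
  imports Defs
begin

text \<open>Every nonempty Dyck path factors uniquely as \<open>U A D B\<close> with \<open>A\<close>, \<open>B\<close> Dyck paths
  (first return to the axis). The descents of \<open>U A D B\<close> are those of \<open>A\<close> with the last one
  lengthened by one (just \<open>[1]\<close> if \<open>A\<close> is empty), followed by those of \<open>B\<close>. So if \<open>E = h\<^sub>0\<close>
  counts the paths of \<open>b\<^sub>n\<close> and \<open>O\<close> the nonempty paths all of whose descents are odd, then
  \<open>E = z\<^sup>2 (O + (1 + E) E)\<close> and \<open>O = z\<^sup>2 (1 + E) (1 + O)\<close>. Eliminating \<open>O\<close>, the series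
  \<open>w = 1 - z\<^sup>2 - z\<^sup>2 E\<close> satisfies \<open>E w\<^sup>2 = z\<^sup>4 (1 + E)\<close>, hence \<open>u = w / z\<close> solves the cubic
  with \<open>z u \<rightarrow> 1\<close>. Such a root is unique, because the cubic's difference quotient at two
  of them has constant term 1; so \<open>v\<^sub>1 = w / z\<close>, from which both closed forms follow. The
  coefficients come from the recurrences for \<open>E\<close> and \<open>O\<close>.\<close>

fun dyck_from :: "nat \<Rightarrow> bool list \<Rightarrow> bool" where
  "dyck_from h [] \<longleftrightarrow> h = 0"
| "dyck_from h (True # xs) \<longleftrightarrow> dyck_from (Suc h) xs"
| "dyck_from h (False # xs) \<longleftrightarrow> 0 < h \<and> dyck_from (h - 1) xs"

lemma ups_simps [simp]:
  "ups [] = 0" "ups (True # xs) = Suc (ups xs)" "ups (False # xs) = ups xs"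
  by (simp_all add: ups_def)

lemma downs_simps [simp]:
  "downs [] = 0" "downs (True # xs) = downs xs" "downs (False # xs) = Suc (downs xs)"
  by (simp_all add: downs_def)

lemma all_prefixes_Cons:
  "(\<forall>i\<le>length (x # xs). P (take i (x # xs))) \<longleftrightarrow> P [] \<and> (\<forall>i\<le>length xs. P (x # take i xs))"
  unfolding le_simps(2)[symmetric] length_Cons All_less_Suc2 by simp

lemma dyck_from_iff_prefixes:
  "dyck_from h xs \<longleftrightarrow>
     (\<forall>i\<le>length xs. downs (take i xs) \<le> h + ups (take i xs)) \<and> h + ups xs = downs xs"
proof (induction xs arbitrary: h)
  case (Cons x xs)
  then show ?case
    by (simp only: all_prefixes_Cons[where P = "\<lambda>ys. downs ys \<le> h + ups ys"])
      (cases x; cases h; auto)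
qed simp

lemma dyck_path_iff_dyck_from: "dyck_path xs \<longleftrightarrow> dyck_from 0 xs"
  by (simp add: dyck_path_def dyck_from_iff_prefixes)

lemma dyck_from_even_length: "dyck_from h xs \<Longrightarrow> even (length xs + h)"
  by (induction h xs rule: dyck_from.induct) auto

lemma dyck_from_append: "dyck_from k xs \<Longrightarrow> dyck_from (k + h) (xs @ ys) \<longleftrightarrow> dyck_from h ys"
  by (induction k xs rule: dyck_from.induct) auto

lemma not_dyck_from_snoc_up: "\<not> dyck_from h (xs @ [True])"
  by (induction h xs rule: dyck_from.induct) auto

lemma dyck_from_Suc_split:
  "dyck_from (Suc h) ys \<Longrightarrow> \<exists>xs zs. ys = xs @ False # zs \<and> dyck_from 0 xs \<and> dyck_from h zs"
proof (induction "length ys" arbitrary: ys h rule: less_induct)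
  case less
  then obtain y ys' where ys: "ys = y # ys'" by (cases ys) auto
  show ?case
  proof (cases y)
    case False
    then show ?thesis using less.prems ys by (intro exI[of _ "[]"] exI[of _ ys']) auto
  next
    case True
    with less.prems ys have "dyck_from (Suc (Suc h)) ys'" by simp
    then obtain xs1 zs1 where 1: "ys' = xs1 @ False # zs1" "dyck_from 0 xs1" "dyck_from (Suc h) zs1"
      using less.hyps[of ys' "Suc h"] ys by auto
    then obtain xs2 zs2 where 2: "zs1 = xs2 @ False # zs2" "dyck_from 0 xs2" "dyck_from h zs2"
      using less.hyps[of zs1 h] ys by auto
    have "dyck_from 0 (True # xs1 @ False # xs2)"
      using dyck_from_append[OF 1(2), of 1 "False # xs2"] 2(2) by simp
    with 1 2 ys True show ?thesis
      by (intro exI[of _ "True # xs1 @ False # xs2"] exI[of _ zs2]) simp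
  qed
qed

definition first_return :: "bool list \<Rightarrow> bool list \<Rightarrow> bool list" where
  "first_return xs ys = True # xs @ False # ys"

lemma length_first_return [simp]:
  "length (first_return xs ys) = Suc (Suc (length xs + length ys))"
  by (simp add: first_return_def)

lemma dyck_first_return:
  "dyck_from 0 xs \<Longrightarrow> dyck_from 0 (first_return xs ys) \<longleftrightarrow> dyck_from 0 ys"
  using dyck_from_append[of 0 xs 1 "False # ys"] by (simp add: first_return_def)

lemma dyck_first_returnE:
  assumes "dyck_from 0 zs" "zs \<noteq> []"
  obtains xs ys where "zs = first_return xs ys" "dyck_from 0 xs" "dyck_from 0 ys"
proof -
  obtain z zs' where zs: "zs = z # zs'" using assms(2) by (cases zs) auto
  with assms(1) have "z" "dyck_from (Suc 0) zs'" by (cases z; simp)+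
  with zs dyck_from_Suc_split[of 0 zs'] that show ?thesis by (auto simp: first_return_def)
qed

lemma not_dyck_from_append_down:
  "dyck_from 0 xs \<Longrightarrow> \<not> dyck_from 0 (xs @ False # ys)"
  using dyck_from_append[of 0 xs 0 "False # ys"] by simp

lemma first_return_inj:
  assumes "dyck_from 0 xs" "dyck_from 0 xs'" "first_return xs ys = first_return xs' ys'"
  shows "xs = xs' \<and> ys = ys'"
proof -
  have eq: "xs @ False # ys = xs' @ False # ys'"
    using assms(3) by (simp add: first_return_def)
  have "xs = xs'"
  proof (rule ccontr)
    assume ne: "xs \<noteq> xs'"
    obtain us where "xs = xs' @ us \<and> us @ False # ys = False # ys' \<or>
                     xs @ us = xs' \<and> False # ys = us @ False # ys'"
      using eq append_eq_append_conv2[of xs "False # ys" xs' "False # ys'"] by blast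
    with ne obtain vs where "xs = xs' @ False # vs \<or> xs' = xs @ False # vs"
      by (cases us) auto
    with assms(1,2) not_dyck_from_append_down show False by blast
  qed
  with eq show ?thesis by simp
qed

lemma desc_aux_append_up: "desc_aux k (xs @ True # ys) = desc_aux k xs @ descents ys"
  by (induction k xs rule: desc_aux.induct) (auto simp: descents_def)

lemma descents_Cons_up [simp]: "descents (True # xs) = descents xs"
  by (simp add: descents_def)

lemma descents_Nil [simp]: "descents [] = []"
  by (simp add: descents_def)

definition bump_last :: "nat list \<Rightarrow> nat list" where
  "bump_last ds = butlast ds @ [Suc (last ds)]"

lemma bump_last_snoc [simp]: "bump_last (cs @ [d]) = cs @ [Suc d]"
  by (simp add: bump_last_def)

lemma bump_last_append: "ds \<noteq> [] \<Longrightarrow> bump_last (cs @ ds) = cs @ bump_last ds"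
  by (simp add: bump_last_def butlast_append)

lemma desc_aux_snoc_down_not_Nil: "desc_aux k (xs @ [False]) \<noteq> []"
  by (induction k xs rule: desc_aux.induct) auto

lemma descents_snoc_down_not_Nil: "descents (xs @ [False]) \<noteq> []"
  by (simp add: descents_def desc_aux_snoc_down_not_Nil)

lemma desc_aux_snoc_down:
  "desc_aux k (xs @ [False, False]) = bump_last (desc_aux k (xs @ [False]))"
  by (induction k xs rule: desc_aux.induct)
    (auto simp: bump_last_def bump_last_append[symmetric] desc_aux_snoc_down_not_Nil)

lemma dyck_snoc_downE:
  assumes "dyck_from 0 xs" "xs \<noteq> []"
  obtains xs' where "xs = xs' @ [False]"
proof -
  obtain xs' x where "xs = xs' @ [x]" using assms(2) by (cases xs rule: rev_cases) auto
  with assms(1) not_dyck_from_snoc_up that show ?thesis by (cases x) auto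
qed

lemma descents_dyck_snoc_down:
  "dyck_from 0 xs \<Longrightarrow> descents (xs @ [False]) = (if xs = [] then [1] else bump_last (descents xs))"
  by (cases "xs = []")
    (auto simp: descents_def desc_aux_snoc_down elim: dyck_snoc_downE)

lemma descents_dyck_eq_Nil_iff: "dyck_from 0 xs \<Longrightarrow> descents xs = [] \<longleftrightarrow> xs = []"
  by (auto simp: descents_def desc_aux_snoc_down_not_Nil elim: dyck_snoc_downE)

lemma descents_first_return:
  assumes "dyck_from 0 ys"
  shows "descents (first_return xs ys) = descents (xs @ [False]) @ descents ys"
proof (cases ys)
  case (Cons y ys')
  with assms have "y" by (cases y) auto
  with Cons show ?thesis
    using desc_aux_append_up[of 0 "xs @ [False]" ys'] by (simp add: first_return_def descents_def)
qed (simp add: first_return_def)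

definition all_odd :: "nat list \<Rightarrow> bool" where
  "all_odd ds \<longleftrightarrow> ds \<noteq> [] \<and> (\<forall>d\<in>set ds. odd d)"

definition odd_but_last_even :: "nat list \<Rightarrow> bool" where
  "odd_but_last_even ds \<longleftrightarrow> ds \<noteq> [] \<and> (\<forall>d\<in>set (butlast ds). odd d) \<and> even (last ds)"

lemma not_all_odd_Nil [simp]: "\<not> all_odd []"
  by (simp add: all_odd_def)

lemma not_odd_but_last_even_Nil [simp]: "\<not> odd_but_last_even []"
  by (simp add: odd_but_last_even_def)

lemma all_odd_append:
  "cs \<noteq> [] \<Longrightarrow> all_odd (cs @ ds) \<longleftrightarrow> all_odd cs \<and> (ds = [] \<or> all_odd ds)"
  by (cases ds) (auto simp: all_odd_def)

lemma odd_but_last_even_append: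
  "ds \<noteq> [] \<Longrightarrow> odd_but_last_even (cs @ ds) \<longleftrightarrow> (cs = [] \<or> all_odd cs) \<and> odd_but_last_even ds"
  by (cases cs) (auto simp: all_odd_def odd_but_last_even_def butlast_append)

lemma all_odd_bump_last: "ds \<noteq> [] \<Longrightarrow> all_odd (bump_last ds) \<longleftrightarrow> odd_but_last_even ds"
  by (cases ds rule: rev_cases) (auto simp: all_odd_def odd_but_last_even_def)

lemma odd_but_last_even_bump_last:
  "ds \<noteq> [] \<Longrightarrow> odd_but_last_even (bump_last ds) \<longleftrightarrow> all_odd ds"
  by (cases ds rule: rev_cases) (auto simp: all_odd_def odd_but_last_even_def)

lemma all_odd_descents_snoc_down:
  "dyck_from 0 xs \<Longrightarrow>
     all_odd (descents (xs @ [False])) \<longleftrightarrow> xs = [] \<or> odd_but_last_even (descents xs)"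
  by (simp add: descents_dyck_snoc_down descents_dyck_eq_Nil_iff all_odd_bump_last)
    (simp add: all_odd_def)

lemma odd_but_last_even_descents_snoc_down:
  "dyck_from 0 xs \<Longrightarrow> odd_but_last_even (descents (xs @ [False])) \<longleftrightarrow> all_odd (descents xs)"
  by (simp add: descents_dyck_snoc_down descents_dyck_eq_Nil_iff odd_but_last_even_bump_last)
    (simp add: all_odd_def odd_but_last_even_def)

lemma all_odd_descents_first_return:
  assumes "dyck_from 0 xs" "dyck_from 0 ys"
  shows "all_odd (descents (first_return xs ys)) \<longleftrightarrow>
           (xs = [] \<or> odd_but_last_even (descents xs)) \<and> (ys = [] \<or> all_odd (descents ys))"
  using assms
  by (simp add: descents_first_return all_odd_append descents_snoc_down_not_Nil
      all_odd_descents_snoc_down descents_dyck_eq_Nil_iff)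

lemma odd_but_last_even_descents_first_return:
  assumes "dyck_from 0 xs" "dyck_from 0 ys"
  shows "odd_but_last_even (descents (first_return xs ys)) \<longleftrightarrow>
           ys = [] \<and> all_odd (descents xs) \<or>
           (xs = [] \<or> odd_but_last_even (descents xs)) \<and> odd_but_last_even (descents ys)"
proof (cases "ys = []")
  case True
  then show ?thesis using assms
    by (simp add: first_return_def odd_but_last_even_descents_snoc_down[symmetric])
next
  case False
  then show ?thesis using assms
    by (simp add: descents_first_return odd_but_last_even_append descents_dyck_eq_Nil_iff
        all_odd_descents_snoc_down descents_snoc_down_not_Nil)
qed

definition paths_with :: "(bool list \<Rightarrow> bool) \<Rightarrow> nat \<Rightarrow> bool list set" where
  "paths_with P n = {xs. length xs = n \<and> dyck_from 0 xs \<and> P xs}"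

definition path_gf :: "(bool list \<Rightarrow> bool) \<Rightarrow> real fps" where
  "path_gf P = Abs_fps (\<lambda>n. real (card (paths_with P n)))"

lemma path_gf_nth [simp]: "path_gf P $ n = real (card (paths_with P n))"
  by (simp add: path_gf_def)

lemma finite_paths_with: "finite (paths_with P n)"
  by (rule finite_subset[OF _ finite_lists_length_eq[of UNIV n]]) (auto simp: paths_with_def)

lemma paths_with_odd: "odd n \<Longrightarrow> paths_with P n = {}"
  using dyck_from_even_length[of 0] by (auto simp: paths_with_def)

lemma path_gf_split:
  "path_gf P = path_gf (\<lambda>xs. P xs \<and> Q xs) + path_gf (\<lambda>xs. P xs \<and> \<not> Q xs)"
proof (rule fps_ext)
  fix n
  have "paths_with P n = paths_with (\<lambda>xs. P xs \<and> Q xs) n \<union> paths_with (\<lambda>xs. P xs \<and> \<not> Q xs) n"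
       "paths_with (\<lambda>xs. P xs \<and> Q xs) n \<inter> paths_with (\<lambda>xs. P xs \<and> \<not> Q xs) n = {}"
    by (auto simp: paths_with_def)
  then show "path_gf P $ n = (path_gf (\<lambda>xs. P xs \<and> Q xs) + path_gf (\<lambda>xs. P xs \<and> \<not> Q xs)) $ n"
    by (simp add: card_Un_disjoint finite_paths_with)
qed

lemma path_gf_Nil: "path_gf (\<lambda>xs. xs = []) = 1"
proof (rule fps_ext)
  fix n
  have "paths_with (\<lambda>xs. xs = []) n = (if n = 0 then {[]} else {})"
    by (auto simp: paths_with_def)
  then show "path_gf (\<lambda>xs. xs = []) $ n = 1 $ n" by simp
qed

lemma path_gf_Nil_or:
  assumes "\<not> P []"
  shows "path_gf (\<lambda>xs. xs = [] \<or> P xs) = 1 + path_gf P"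
proof -
  have "(\<lambda>xs. (xs = [] \<or> P xs) \<and> xs = []) = (\<lambda>xs. xs = [])"
       "(\<lambda>xs. (xs = [] \<or> P xs) \<and> xs \<noteq> []) = P"
    using assms by auto
  then show ?thesis
    using path_gf_split[of "\<lambda>xs. xs = [] \<or> P xs" "\<lambda>xs. xs = []"] by (simp add: path_gf_Nil)
qed

lemma card_paths_with_first_return:
  assumes R: "\<And>xs ys. dyck_from 0 xs \<Longrightarrow> dyck_from 0 ys \<Longrightarrow>
                R (first_return xs ys) \<longleftrightarrow> P xs \<and> Q ys"
  shows "card (paths_with R (Suc (Suc n))) =
           (\<Sum>i\<le>n. card (paths_with P i) * card (paths_with Q (n - i)))"
proof -
  define pairs where "pairs = (\<Union>i\<le>n. paths_with P i \<times> paths_with Q (n - i))"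
  have "paths_with R (Suc (Suc n)) = case_prod first_return ` pairs"
  proof (intro equalityI subsetI)
    fix zs assume "zs \<in> paths_with R (Suc (Suc n))"
    then have zs: "length zs = Suc (Suc n)" "dyck_from 0 zs" "R zs"
      by (auto simp: paths_with_def)
    then obtain xs ys where "zs = first_return xs ys" "dyck_from 0 xs" "dyck_from 0 ys"
      by (auto elim: dyck_first_returnE)
    with zs R have "(xs, ys) \<in> pairs"
      by (auto simp: pairs_def paths_with_def intro!: UN_I[of "length xs"])
    then show "zs \<in> case_prod first_return ` pairs"
      using \<open>zs = first_return xs ys\<close> by force
  qed (auto simp: pairs_def paths_with_def R dyck_first_return)
  moreover have "inj_on (case_prod first_return) pairs"
    by (auto simp: inj_on_def pairs_def paths_with_def dest: first_return_inj)
  moreover have "card pairs = (\<Sum>i\<le>n. card (paths_with P i) * card (paths_with Q (n - i)))"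
    unfolding pairs_def
    by (subst card_UN_disjoint)
      (simp_all add: finite_paths_with card_cartesian_product, auto simp: paths_with_def)
  ultimately show ?thesis by (simp add: card_image)
qed

lemma path_gf_first_return:
  assumes "\<not> R []"
    and "\<And>xs ys. dyck_from 0 xs \<Longrightarrow> dyck_from 0 ys \<Longrightarrow>
           R (first_return xs ys) \<longleftrightarrow> P xs \<and> Q ys"
  shows "path_gf R = fps_X^2 * (path_gf P * path_gf Q)"
proof (rule fps_ext)
  fix n
  consider "n = 0" | "n = 1" | m where "n = Suc (Suc m)"
    by (metis One_nat_def not0_implies_Suc)
  then show "path_gf R $ n = (fps_X^2 * (path_gf P * path_gf Q)) $ n"
  proof cases
    case 1
    then have "paths_with R n = {}" using assms(1) by (auto simp: paths_with_def)
    with 1 show ?thesis by simp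
  next
    case 2
    then show ?thesis by (simp add: paths_with_odd)
  next
    case 3
    then have "(fps_X^2 * (path_gf P * path_gf Q)) $ n = (path_gf P * path_gf Q) $ m"
      by (simp add: fps_X_power_mult_nth)
    also have "\<dots> = path_gf R $ n"
      using 3 card_paths_with_first_return[of R P Q m] assms(2)
      by (simp add: fps_mult_nth atLeast0AtMost)
    finally show ?thesis by simp
  qed
qed

definition primitive :: "bool list \<Rightarrow> bool" where
  "primitive zs \<longleftrightarrow> (\<exists>xs. dyck_from 0 xs \<and> zs = first_return xs [])"

lemma primitive_first_return:
  "dyck_from 0 xs \<Longrightarrow> dyck_from 0 ys \<Longrightarrow> primitive (first_return xs ys) \<longleftrightarrow> ys = []"
  by (auto simp: primitive_def dest: first_return_inj)

definition E_gf :: "real fps" where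
  "E_gf = path_gf (\<lambda>xs. odd_but_last_even (descents xs))"

definition O_gf :: "real fps" where
  "O_gf = path_gf (\<lambda>xs. all_odd (descents xs))"

lemma O_gf_equation: "O_gf = fps_X^2 * ((1 + E_gf) * (1 + O_gf))"
proof -
  have "O_gf = fps_X^2 * (path_gf (\<lambda>xs. xs = [] \<or> odd_but_last_even (descents xs)) *
                          path_gf (\<lambda>ys. ys = [] \<or> all_odd (descents ys)))"
    unfolding O_gf_def
    by (rule path_gf_first_return) (simp_all add: all_odd_descents_first_return)
  then show ?thesis by (simp add: path_gf_Nil_or E_gf_def O_gf_def)
qed

lemma E_gf_equation: "E_gf = fps_X^2 * (O_gf + (1 + E_gf) * E_gf)"
proof -
  let ?E = "\<lambda>xs. odd_but_last_even (descents xs)"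
  have "path_gf (\<lambda>zs. ?E zs \<and> primitive zs) =
          fps_X^2 * (path_gf (\<lambda>xs. all_odd (descents xs)) * path_gf (\<lambda>ys. ys = []))"
    by (rule path_gf_first_return)
      (auto simp: odd_but_last_even_descents_first_return primitive_first_return)
  moreover have "path_gf (\<lambda>zs. ?E zs \<and> \<not> primitive zs) =
          fps_X^2 * (path_gf (\<lambda>xs. xs = [] \<or> ?E xs) * path_gf ?E)"
    by (rule path_gf_first_return)
      (auto simp: odd_but_last_even_descents_first_return primitive_first_return)
  ultimately show ?thesis
    using path_gf_split[of ?E primitive]
    by (simp add: path_gf_Nil path_gf_Nil_or E_gf_def O_gf_def algebra_simps)
qed

definition cubic :: "'a::comm_ring_1 \<Rightarrow> 'a \<Rightarrow> 'a" where
  "cubic x w = w^3 + (x^2 - 1) * w^2 - x^4 * w + x^4"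

lemma cubic_mult_left:
  fixes x u :: "'a::idom"
  shows "cubic x (x * u) = x^2 * (x * u^3 + (x^2 - 1) * u^2 - x^3 * u + x^2)"
  unfolding cubic_def by algebra

lemma cubic_diff:
  fixes x w1 w2 :: "'a::idom"
  shows "cubic x w1 - cubic x w2 =
     (w1 - w2) * (w1^2 + w1 * w2 + w2^2 + (x^2 - 1) * (w1 + w2) - x^4)"
  unfolding cubic_def by algebra

lemma gf_system_eliminate:
  fixes e p w x :: "'a::idom"
  assumes e: "e = x^2 * (p + (1 + e) * e)" and p: "p = x^2 * ((1 + e) * (1 + p))"
    and w: "w = 1 - x^2 - x^2 * e"
  shows "e * w^2 = x^4 * (1 + e)"
proof -
  have "x^2 * p = e - x^2 * (1 + e) * e" "x^2 * p = x^2 * (1 + e) * (x^2 + x^2 * p)"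
    using e p by algebra+
  moreover have "e * w^2 - x^4 * (1 + e) =
      (e - x^2 * (1 + e) * e) - x^2 * (1 + e) * (x^2 + (e - x^2 * (1 + e) * e))"
    unfolding w by algebra
  ultimately show ?thesis by simp
qed

lemma cubic_eq_0I:
  fixes e w x :: "'a::idom"
  assumes "w = 1 - x^2 - x^2 * e" "e * w^2 = x^4 * (1 + e)"
  shows "cubic x w = 0"
proof -
  have "cubic x w = -(x^2) * (e * w^2 - x^4 * (1 + e))"
    unfolding cubic_def assms(1) by algebra
  with assms(2) show ?thesis by simp
qed

lemma cubic_fps_unique:
  fixes W1 W2 :: "'a::idom fps"
  assumes "cubic fps_X W1 = 0" "cubic fps_X W2 = 0" "W1 $ 0 = 1" "W2 $ 0 = 1"
  shows "W1 = W2"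
proof -
  let ?Q = "W1^2 + W1 * W2 + W2^2 + (fps_X^2 - 1) * (W1 + W2) - fps_X^4"
  have "?Q $ 0 = 1" using assms(3,4) by (simp add: fps_power_zeroth)
  then have "?Q \<noteq> 0" by (metis fps_nonzeroI one_neq_zero)
  moreover have "(W1 - W2) * ?Q = 0" using cubic_diff[of fps_X W1 W2] assms(1,2) by simp
  ultimately show ?thesis by simp
qed

lemma fps_to_fls_cubic: "fps_to_fls (cubic fps_X W) = cubic fls_X (fps_to_fls W)"
  by (simp add: cubic_def fls_times_fps_to_fls fps_to_fls_power)

lemma v1_eq:
  assumes "cubic fps_X W = 0" "W $ 0 = (1 :: real)"
  shows "v1 = fps_to_fls W / fls_X"
proof -
  have "fls_X * u^3 + (fls_X^2 - 1) * u^2 - fls_X^3 * u + fls_X^2 = 0 \<and>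
          0 \<le> fls_subdegree (fls_X * u) \<and> fls_nth (fls_X * u) 0 = 1 \<longleftrightarrow>
        fls_X * u = fps_to_fls W" for u :: "real fls"
  proof
    assume u: "fls_X * u^3 + (fls_X^2 - 1) * u^2 - fls_X^3 * u + fls_X^2 = 0 \<and>
                 0 \<le> fls_subdegree (fls_X * u) \<and> fls_nth (fls_X * u) 0 = 1"
    define U where "U = fls_regpart (fls_X * u)"
    have XU: "fls_X * u = fps_to_fls U" using u by (simp add: U_def)
    have "fps_to_fls (cubic fps_X U) = 0"
      using cubic_mult_left[of fls_X u] u by (simp add: fps_to_fls_cubic flip: XU)
    then have "U = W" using cubic_fps_unique[OF _ assms(1)] u assms(2) by (simp add: U_def)
    with XU show "fls_X * u = fps_to_fls W" by simp
  next
    assume XU: "fls_X * u = fps_to_fls W"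
    then show "fls_X * u^3 + (fls_X^2 - 1) * u^2 - fls_X^3 * u + fls_X^2 = 0 \<and>
                 0 \<le> fls_subdegree (fls_X * u) \<and> fls_nth (fls_X * u) 0 = 1"
      using cubic_mult_left[of fls_X u] fps_to_fls_cubic[of W] assms
        fls_subdegree_fls_to_fps_gt0[of W]
      by simp
  qed
  then have "v1 = (THE u. fls_X * u = fps_to_fls W)"
    by (simp only: v1_def)
  also have "\<dots> = fps_to_fls W / fls_X"
  proof (rule the_equality)
    show "fls_X * (fps_to_fls W / fls_X) = fps_to_fls W"
      unfolding times_divide_eq_right by (rule nonzero_mult_div_cancel_left[OF fls_X_nonzero])
  next
    fix u assume "fls_X * u = fps_to_fls W"
    then show "u = fps_to_fls W / fls_X"
      by (subst nonzero_eq_divide_eq[OF fls_X_nonzero]) (simp add: mult.commute)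
  qed
  finally show ?thesis .
qed

lemma quotient_closed_form:
  fixes e w x :: "'a::field"
  assumes "x \<noteq> 0" "w^2 \<noteq> x^4" "e * w^2 = x^4 * (1 + e)"
  shows "e = x^2 / ((w / x)^2 - x^2)"
proof -
  have "(w / x)^2 - x^2 = (w^2 - x^4) / x^2"
    using assms(1) by (simp add: power_divide field_simps)
  moreover have "e * (w^2 - x^4) = x^4" using assms(3) by (simp add: algebra_simps)
  ultimately show ?thesis using assms(1,2) by (simp add: field_simps)
qed

lemma difference_closed_form:
  fixes e w x :: "'a::field"
  assumes "x \<noteq> 0" "w = 1 - x^2 - x^2 * e"
  shows "e = 1 / x^2 - (w / x) / x - 1"
  using assms by (simp add: field_simps power2_eq_square)

lemma b_eq_card: "b n = card (paths_with (\<lambda>xs. odd_but_last_even (descents xs)) (2 * n))"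
  by (simp add: b_def paths_with_def dyck_path_iff_dyck_from odd_but_last_even_def)

lemma E_gf_nth_0: "E_gf $ 0 = 0" and O_gf_nth_0: "O_gf $ 0 = 0"
  by (simp_all add: E_gf_def O_gf_def paths_with_def)

lemma E_gf_nth_odd: "odd n \<Longrightarrow> E_gf $ n = 0" and O_gf_nth_odd: "odd n \<Longrightarrow> O_gf $ n = 0"
  by (simp_all add: E_gf_def O_gf_def paths_with_odd)

lemma h0_eq: "h0 = fps_to_fls E_gf"
proof -
  have "(if even k \<and> 2 \<le> k then real (b (k div 2)) else 0) = E_gf $ k" for k
  proof (cases "even k")
    case True
    then obtain n where "k = 2 * n" by blast
    then show ?thesis
      by (cases "n = 0") (simp add: E_gf_nth_0, simp add: b_eq_card E_gf_def)
  qed (simp add: E_gf_nth_odd)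
  then have "Abs_fps (\<lambda>k. if even k \<and> 2 \<le> k then real (b (k div 2)) else 0) = E_gf"
    by (simp add: fps_eq_iff)
  then show ?thesis by (simp add: h0_def)
qed

lemma E_gf_nth_add_2:
  "E_gf $ (n + 2) = O_gf $ n + E_gf $ n + (\<Sum>i\<le>n. E_gf $ i * E_gf $ (n - i))"
proof -
  have "E_gf $ (n + 2) = (O_gf + (1 + E_gf) * E_gf) $ n"
    by (subst E_gf_equation) (simp add: fps_X_power_mult_nth)
  then show ?thesis by (simp add: ring_distribs fps_mult_nth atLeast0AtMost)
qed

lemma O_gf_nth_add_2:
  "O_gf $ (n + 2) = (if n = 0 then 1 else 0) + E_gf $ n + O_gf $ n + (\<Sum>i\<le>n. E_gf $ i * O_gf $ (n - i))"
proof -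
  have "O_gf $ (n + 2) = ((1 + E_gf) * (1 + O_gf)) $ n"
    by (subst O_gf_equation) (simp add: fps_X_power_mult_nth)
  then show ?thesis by (simp add: ring_distribs fps_mult_nth atLeast0AtMost)
qed

lemma E_gf_values:
  "map (\<lambda>n. E_gf $ (2 * n)) [1..<8] = [0, 1, 2, 4, 10, 26, 68]"
proof -
  note step = E_gf_nth_add_2 O_gf_nth_add_2
  note simps = atMost_nat_numeral E_gf_nth_0 O_gf_nth_0 E_gf_nth_odd O_gf_nth_odd
  have 2: "E_gf $ 2 = 0" "O_gf $ 2 = 1" using step[of 0] by (simp_all add: simps numeral_2_eq_2)
  have 4: "E_gf $ 4 = 1" "O_gf $ 4 = 1" using step[of 2] by (simp_all add: simps 2)
  have 6: "E_gf $ 6 = 2" "O_gf $ 6 = 2" using step[of 4] by (simp_all add: simps 2 4)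
  have 8: "E_gf $ 8 = 4" "O_gf $ 8 = 5" using step[of 6] by (simp_all add: simps 2 4 6)
  have 10: "E_gf $ 10 = 10" "O_gf $ 10 = 12" using step[of 8] by (simp_all add: simps 2 4 6 8)
  have 12: "E_gf $ 12 = 26" "O_gf $ 12 = 30" using step[of 10] by (simp_all add: simps 2 4 6 8 10)
  have 14: "E_gf $ 14 = 68" using step(1)[of 12] by (simp add: simps 2 4 6 8 10 12)
  show ?thesis by (simp add: upt_rec 2 4 6 8 10 12 14)
qed

theorem mainTheorem2:
  shows "h0 = fls_X ^ 2 / (v1 ^ 2 - fls_X ^ 2)
       \<and> h0 = 1 / fls_X ^ 2 - v1 / fls_X - 1
       \<and> map b [1..<8] = [0, 1, 2, 4, 10, 26, 68]"
proof -
  define W where "W = 1 - fps_X^2 - fps_X^2 * E_gf"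
  have EW: "E_gf * W^2 = fps_X^4 * (1 + E_gf)"
    using E_gf_equation O_gf_equation W_def by (rule gf_system_eliminate)
  have W0: "W $ 0 = 1" by (simp add: W_def)
  have v1: "v1 = fps_to_fls W / fls_X"
    using cubic_eq_0I[OF W_def EW] W0 by (rule v1_eq)
  have "(W^2 - fps_X^4) $ 0 \<noteq> 0" using W0 by (simp add: fps_power_zeroth)
  then have W_ne: "fps_to_fls W ^ 2 \<noteq> fls_X ^ 4"
    by (metis fps_nonzeroI fps_to_fls_eq_iff fps_to_fls_power fps_X_to_fls right_minus_eq)
  have EW_fls: "fps_to_fls E_gf * fps_to_fls W ^ 2 = fls_X ^ 4 * (1 + fps_to_fls E_gf)"
    using arg_cong[OF EW, of fps_to_fls] by (simp add: fls_times_fps_to_fls fps_to_fls_power)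
  have W_fls: "fps_to_fls W = 1 - fls_X ^ 2 - fls_X ^ 2 * fps_to_fls E_gf"
    by (simp add: W_def fls_times_fps_to_fls fps_to_fls_power)
  have "map b [1..<8] = [0, 1, 2, 4, 10, 26, 68]"
    using E_gf_values by (simp add: upt_rec b_eq_card E_gf_def)
  then show ?thesis
    unfolding h0_eq v1
    by (intro conjI quotient_closed_form[OF fls_X_nonzero W_ne EW_fls]
        difference_closed_form[OF fls_X_nonzero W_fls])
qed

end
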